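(* Let $(X_1,\dots,X_d,Y)$ follow a structural equation model with causal DAG $G$ in which $Y$ is a sink node and $Y=f^*(X)+\varepsilon$ with $\mathbb{E}[\varepsilon]=0$, $\varepsilon$ independent of $X$, where $f^*$ depends on $X$ only through $X_{\mathrm{pa}(Y)}$. Let $\mathcal{I}\subseteq\{1,\dots,d\}$ satisfy $$\mathrm{pa}(Y)\subseteq\mathcal{I}\cup\mathrm{desc}(\mathcal{I})^C.$$ Then for every covariate-fixing transformation $T_{\mathcal{I}\to z}$, $$\mathbb{E}_X\big[f^*(T_{\mathcal{I}\to z}(X))-f^*(X)\big]=\mathbb{E}_{\widetilde X\sim do(X_{\mathcal{I}}=z_{\mathcal{I}})}\big[f^*(\widetilde X)\big]-\mathbb{E}_X\big[f^*(X)\big].$$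
   Context: $\mathrm{pa}(Y)$ is the set of parents of $Y$ in $G$; $\mathrm{desc}(\mathcal{I})$ is the set of covariates that are descendants in $G$ of at least one variable in $\mathcal{I}$, and $A^C$ denotes complement in $\{1,\dots,d\}$. For $\mathcal{I}$ and $z\in\mathbb{R}^d$, the covariate-fixing transformation is $T_{\mathcal{I}\to z}(x)_j=z_j$ for $j\in\mathcal{I}$ and $T_{\mathcal{I}\to z}(x)_j=x_j$ for $j\notin\mathcal{I}$. $\mathbb{E}_X$ is expectation under the observational (pre-intervention) distribution of $X$; $do(X_{\mathcal{I}}=z_{\mathcal{I}})$ denotes the interventional distribution of the covariates in the SEM obtained by Pearl's do-operation setting the variables in $\mathcal{I}$ to $z_{\mathcal{I}}$ (other variables, including descendants of $\mathcal{I}$, are generated by their structural equations). *)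

theory Defs
  imports "HOL-Probability.Probability"
begin

text \<open>Covariates are indexed by {1..d}; a covariate vector is a function nat => real
  (values outside {1..d} are irrelevant).\<close>

definition fix_cov :: "nat set \<Rightarrow> (nat \<Rightarrow> real) \<Rightarrow> (nat \<Rightarrow> real) \<Rightarrow> (nat \<Rightarrow> real)" where
  "fix_cov I z x = (\<lambda>j. if j \<in> I then z j else x j)"

text \<open>Edges k -> j of the causal DAG restricted to the covariates (Y is a sink, so it is
  never a parent of a covariate).\<close>
definition dag_edges :: "nat \<Rightarrow> (nat \<Rightarrow> nat set) \<Rightarrow> (nat \<times> nat) set" where
  "dag_edges d pa = {(k, j). j \<in> {1..d} \<and> k \<in> pa j}"

definition is_dag :: "nat \<Rightarrow> (nat \<Rightarrow> nat set) \<Rightarrow> bool" where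
  "is_dag d pa \<longleftrightarrow> (\<forall>j\<in>{1..d}. pa j \<subseteq> {1..d}) \<and> acyclic (dag_edges d pa)"

definition desc :: "nat \<Rightarrow> (nat \<Rightarrow> nat set) \<Rightarrow> nat set \<Rightarrow> nat set" where
  "desc d pa I = {k. \<exists>i\<in>I. (i, k) \<in> (dag_edges d pa)\<^sup>+}"

text \<open>The covariate vector generated by the SEM with structural assignments g and noise
  realisation e, after the do-intervention setting the variables in I to z
  (I = {} gives the observational SEM).\<close>
definition sem_solution ::
  "nat \<Rightarrow> nat set \<Rightarrow> (nat \<Rightarrow> real) \<Rightarrow> (nat \<Rightarrow> (nat \<Rightarrow> real) \<Rightarrow> 'n \<Rightarrow> real) \<Rightarrow> (nat \<Rightarrow> 'n) \<Rightarrow> (nat \<Rightarrow> real)"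
  where
  "sem_solution d I z g e = (THE x. (\<forall>j\<in>{1..d}. x j = (if j \<in> I then z j else g j x (e j)))
                                 \<and> (\<forall>j. j \<notin> {1..d} \<longrightarrow> x j = undefined))"

end

theory Submission
  imports Defs
begin

text \<open>Fix a noise realisation. The observational covariate vector with the coordinates in
  I overwritten by z, and the covariate vector generated under do(X_I = z), agree on I by
  construction, and on every non-descendant of I by well-founded induction along the DAG,
  since their structural assignments then read only parents that are again outside I and
  its descendants. By the adjustment condition they agree on pa(Y), so f* takes the same
  value on both for every realisation; the identity is then linearity of the integral.\<close>

lemma wf_dag_edges:
  assumes "is_dag d pa"
  shows "wf (dag_edges d pa)"
proof -
  have "dag_edges d pa \<subseteq> {1..d} \<times> {1..d}"
    using assms by (auto simp: is_dag_def dag_edges_def)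
  then have "finite (dag_edges d pa)"
    by (rule finite_subset) simp
  then show ?thesis
    using assms by (auto simp: is_dag_def intro: finite_acyclic_wf)
qed

lemma dag_edgesI: "j \<in> {1..d} \<Longrightarrow> k \<in> pa j \<Longrightarrow> (k, j) \<in> dag_edges d pa"
  by (simp add: dag_edges_def)

lemma desc_edge:
  assumes "k \<in> I \<union> desc d pa I" and "(k, j) \<in> dag_edges d pa"
  shows "j \<in> desc d pa I"
  using assms unfolding desc_def by (blast intro: trancl_into_trancl)

lemma sem_solution_eqs:
  fixes g :: "nat \<Rightarrow> (nat \<Rightarrow> real) \<Rightarrow> 'n \<Rightarrow> real"
  assumes wf: "wf (dag_edges d pa)"
    and g_pa: "\<And>j x x' e. j \<in> {1..d} \<Longrightarrow> (\<forall>k\<in>pa j. x k = x' k) \<Longrightarrow> g j x e = g j x' e"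
  shows "\<forall>j\<in>{1..d}. sem_solution d I z g e j
                     = (if j \<in> I then z j else g j (sem_solution d I z g e) (e j))"
proof -
  let ?R = "dag_edges d pa"
  let ?P = "\<lambda>x. (\<forall>j\<in>{1..d}. x j = (if j \<in> I then z j else g j x (e j)))
                 \<and> (\<forall>j. j \<notin> {1..d} \<longrightarrow> x j = undefined)"
  define H where "H = (\<lambda>f j. if j \<in> {1..d} then (if j \<in> I then z j else g j f (e j))
                             else undefined)"
  define F where "F = wfrec ?R H"
  have solution: "?P F"
  proof -
    have "F j = (if j \<in> {1..d} then (if j \<in> I then z j else g j F (e j)) else undefined)" for j
    proof -
      have "g j (cut F ?R j) (e j) = g j F (e j)" if "j \<in> {1..d}"
        by (rule g_pa[OF that]) (simp add: cut_apply dag_edgesI[OF that])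
      moreover have "F j = H (cut F ?R j) j"
        unfolding F_def by (rule wfrec[OF wf])
      ultimately show ?thesis
        unfolding H_def by simp
    qed
    then show ?thesis
      by simp
  qed
  have unique: "x = y" if "?P x" "?P y" for x y
  proof
    fix j
    show "x j = y j"
    proof (induction j rule: wf_induct[OF wf])
      case (1 j)
      then have "j \<in> {1..d} \<Longrightarrow> g j x (e j) = g j y (e j)"
        by (intro g_pa) (simp_all add: dag_edgesI)
      with that show ?case by (cases "j \<in> {1..d}") auto
    qed
  qed
  have "?P (THE x. ?P x)"
    by (rule theI[of ?P, OF solution]) (rule unique[OF _ solution])
  then show ?thesis
    unfolding sem_solution_def by simp
qed

lemma sem_solution_eq_outside_desc:
  fixes g :: "nat \<Rightarrow> (nat \<Rightarrow> real) \<Rightarrow> 'n \<Rightarrow> real"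
  assumes dag: "is_dag d pa"
    and g_pa: "\<And>j x x' e. j \<in> {1..d} \<Longrightarrow> (\<forall>k\<in>pa j. x k = x' k) \<Longrightarrow> g j x e = g j x' e"
    and j: "j \<in> {1..d} - (I \<union> desc d pa I)"
  shows "sem_solution d {} z g e j = sem_solution d I z' g e j"
proof -
  let ?x = "sem_solution d {} z g e" and ?y = "sem_solution d I z' g e"
  have wf: "wf (dag_edges d pa)"
    using dag by (rule wf_dag_edges)
  have pa_sub: "i \<in> {1..d} \<Longrightarrow> pa i \<subseteq> {1..d}" for i
    using dag by (auto simp: is_dag_def)
  note eqs = sem_solution_eqs[where g = g, OF wf g_pa]
  show ?thesis
    using j
  proof (induction j rule: wf_induct[OF wf])
    case (1 j)
    have "?x k = ?y k" if k: "k \<in> pa j" for k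
    proof -
      have kj: "(k, j) \<in> dag_edges d pa"
        using "1.prems" k by (auto intro: dag_edgesI)
      have "k \<notin> I \<union> desc d pa I"
        using desc_edge[OF _ kj] "1.prems" by blast
      with "1.IH" kj pa_sub k "1.prems" show ?thesis
        by blast
    qed
    then have "g j ?x (e j) = g j ?y (e j)"
      using "1.prems" by (intro g_pa) auto
    with "1.prems" eqs show ?case
      by auto
  qed
qed

lemma fix_cov_sem_solution_eq:
  fixes g :: "nat \<Rightarrow> (nat \<Rightarrow> real) \<Rightarrow> 'n \<Rightarrow> real"
  assumes dag: "is_dag d pa"
    and g_pa: "\<And>j x x' e. j \<in> {1..d} \<Longrightarrow> (\<forall>k\<in>pa j. x k = x' k) \<Longrightarrow> g j x e = g j x' e"
    and I_sub: "I \<subseteq> {1..d}"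
    and k: "k \<in> I \<union> ({1..d} - desc d pa I)"
  shows "fix_cov I z (sem_solution d {} z' g e) k = sem_solution d I z g e k"
proof (cases "k \<in> I")
  case True
  then show ?thesis
    using sem_solution_eqs[where g = g, OF wf_dag_edges[OF dag] g_pa] I_sub by (auto simp: fix_cov_def)
next
  case False
  then show ?thesis
    using sem_solution_eq_outside_desc[where g = g, OF dag g_pa] k by (auto simp: fix_cov_def)
qed

theorem theorem3:
  fixes M :: "'w measure" and S :: "'n measure" and N :: "nat \<Rightarrow> 'w \<Rightarrow> 'n"
    and d :: nat and pa :: "nat \<Rightarrow> nat set" and paY :: "nat set"
    and g :: "nat \<Rightarrow> (nat \<Rightarrow> real) \<Rightarrow> 'n \<Rightarrow> real"
    and fstar :: "(nat \<Rightarrow> real) \<Rightarrow> real" and eps :: "'w \<Rightarrow> real"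
    and I :: "nat set" and z :: "nat \<Rightarrow> real"
  assumes prob: "prob_space M"
    and noise_indep: "prob_space.indep_vars M (\<lambda>_. S) N {1..d}"
    and dag: "is_dag d pa"
    and g_meas: "\<And>j. j \<in> {1..d} \<Longrightarrow>
          (\<lambda>(x, e). g j x e) \<in> borel_measurable (PiM {1..d} (\<lambda>_. borel) \<Otimes>\<^sub>M S)"
    and g_pa: "\<And>j x x' e. j \<in> {1..d} \<Longrightarrow> (\<forall>k\<in>pa j. x k = x' k) \<Longrightarrow> g j x e = g j x' e"
    and paY_sub: "paY \<subseteq> {1..d}"
    and f_meas: "fstar \<in> borel_measurable (PiM {1..d} (\<lambda>_. borel))"
    and f_paY: "\<And>x x'. (\<forall>k\<in>paY. x k = x' k) \<Longrightarrow> fstar x = fstar x'"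
    and eps_int: "integrable M eps"
    and eps_mean: "(LINT \<omega>|M. eps \<omega>) = 0"
    and eps_indep: "\<forall>A\<in>sets (borel :: real measure). \<forall>B\<in>sets (PiM {1..d} (\<lambda>_. borel)).
          measure M {\<omega>\<in>space M. eps \<omega> \<in> A \<and> sem_solution d {} z g (\<lambda>j. N j \<omega>) \<in> B}
          = measure M {\<omega>\<in>space M. eps \<omega> \<in> A}
            * measure M {\<omega>\<in>space M. sem_solution d {} z g (\<lambda>j. N j \<omega>) \<in> B}"
    and I_sub: "I \<subseteq> {1..d}"
    and adj: "paY \<subseteq> I \<union> ({1..d} - desc d pa I)"
    and int_obs: "integrable M (\<lambda>\<omega>. fstar (sem_solution d {} z g (\<lambda>j. N j \<omega>)))"
    and int_do: "integrable M (\<lambda>\<omega>. fstar (sem_solution d I z g (\<lambda>j. N j \<omega>)))"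
  shows "(LINT \<omega>|M. fstar (fix_cov I z (sem_solution d {} z g (\<lambda>j. N j \<omega>)))
                      - fstar (sem_solution d {} z g (\<lambda>j. N j \<omega>)))
         = (LINT \<omega>|M. fstar (sem_solution d I z g (\<lambda>j. N j \<omega>)))
           - (LINT \<omega>|M. fstar (sem_solution d {} z g (\<lambda>j. N j \<omega>)))"
proof -
  have pointwise: "fstar (fix_cov I z (sem_solution d {} z g e)) = fstar (sem_solution d I z g e)"
    for e
  proof (rule f_paY, rule ballI)
    fix k
    assume "k \<in> paY"
    with adj show "fix_cov I z (sem_solution d {} z g e) k = sem_solution d I z g e k"
      by (intro fix_cov_sem_solution_eq[OF dag g_pa I_sub]) auto
  qed
  show ?thesis
    unfolding pointwise by (rule Bochner_Integration.integral_diff[OF int_do int_obs])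
qed

end
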